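(* Fix an integer $d\ge 2$ and $\theta>0$, and regard $F$ (defined in the context) as an affine function of the real variables $\sigma_{CC,kl},\sigma_{CD,kl},\sigma_{DD,kl}$, $k,l\in\{0,\ldots,d-1\}$, with all other quantities held fixed. Then, for every $k,l\in\{0,\ldots,d-1\}$: (i) the coefficient of $\sigma_{CC,kl}$ in $F$ is strictly negative; (ii) the coefficient of $\sigma_{DD,kl}$ in $F$ is strictly positive; (iii) the coefficient of $\sigma_{CD,kl}$ in $F$ is strictly positive if $k+l>d-1$, strictly negative if $k+l<d-1$, and zero if $k+l=d-1$. Consequently, decreasing any $\sigma_{CC,kl}$ or increasing any $\sigma_{DD,kl}$ increases $F$; increasing $\sigma_{CD,kl}$ increases $F$ when $k+l>d-1$, decreases it when $k+l<d-1$, and leaves it unchanged when $k+l=d-1$.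
   Context: Model: in a large well-mixed population, individuals use strategy $C$ (cooperate) or $D$ (defect) and interact in random groups of size $d$. A $C$-player (resp. $D$-player) whose $d-1$ partners include $k$ cooperators receives the random payoff $a_k$ (resp. $b_k$), $k=0,\ldots,d-1$. Payoffs are redrawn independently at each time step, and for a selection intensity $\delta\ge 0$ they satisfy $E[a_k]=\mu_{C,k}\delta+o(\delta)$, $E[b_k]=\mu_{D,k}\delta+o(\delta)$, $E[a_ka_l]=\sigma_{CC,kl}\delta+o(\delta)$, $E[b_kb_l]=\sigma_{DD,kl}\delta+o(\delta)$, $E[a_kb_l]=\sigma_{CD,kl}\delta+o(\delta)$, with all moments of order at least $3$ being $o(\delta)$. The population evolves by a Moran birth–death process with fitness $1+{}$payoff and symmetric mutation, with scaled mutation rate $\theta>0$. For integers $0\le k\le n$ define $$\psi_n^k=\frac{\prod_{i=1}^{k}(\theta+i-1)\prod_{j=1}^{n-k}(\theta+j-1)}{\prod_{l=1}^{n}(2\theta+l-1)}$$ (empty products equal $1$), and define $$F=\sum_{k=0}^{d-1}\binom{d-1}{k}\psi_{d+1}^{k+1}(\mu_{C,k}-\mu_{D,k})+\sum_{k,l=0}^{d-1}\binom{d-1}{k}\binom{d-1}{l}\Big[-\psi_{2d+1}^{k+l+2}(\sigma_{CC,kl}-\sigma_{CD,kl})+\psi_{2d+1}^{k+l+1}(\sigma_{DD,kl}-\sigma_{CD,kl})\Big].$$ In the paper's large-population, weak-selection approximation, the stationary average abundance of $C$ is $\tfrac12+\tfrac{\delta(1-u)}{u}F$ to first order in $\delta$,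 where $u$ is the per-step mutation probability. Thus weak selection favors the abundance of $C$ iff $F>0$, and increasing (resp. decreasing) $F$ increases (resp. decreases) the average abundance of $C$. *)

theory Defs
  imports Complex_Main
begin

definition psi :: "real \<Rightarrow> nat \<Rightarrow> nat \<Rightarrow> real" where
  "psi \<theta> n k =
     (\<Prod>i=1..k. \<theta> + real i - 1) * (\<Prod>j=1..n-k. \<theta> + real j - 1)
     / (\<Prod>l=1..n. 2 * \<theta> + real l - 1)"

definition Fval :: "nat \<Rightarrow> real \<Rightarrow> (nat \<Rightarrow> real) \<Rightarrow> (nat \<Rightarrow> real)
    \<Rightarrow> (nat \<Rightarrow> nat \<Rightarrow> real) \<Rightarrow> (nat \<Rightarrow> nat \<Rightarrow> real) \<Rightarrow> (nat \<Rightarrow> nat \<Rightarrow> real) \<Rightarrow> real" where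
  "Fval d \<theta> muC muD sCC sCD sDD =
     (\<Sum>k=0..d-1. real ((d-1) choose k) * psi \<theta> (d+1) (k+1) * (muC k - muD k))
   + (\<Sum>k=0..d-1. \<Sum>l=0..d-1. real ((d-1) choose k) * real ((d-1) choose l) *
        (- psi \<theta> (2*d+1) (k+l+2) * (sCC k l - sCD k l)
         + psi \<theta> (2*d+1) (k+l+1) * (sDD k l - sCD k l)))"

end

theory Submission
  imports Defs
begin

(* F is affine in the sigmas: writing psi' m = psi theta (2d+1) m and w > 0 for the product of
   binomial coefficients, the coefficient of sigma_CC(k,l) is -w psi'(k+l+2), that of sigma_DD(k,l)
   is w psi'(k+l+1), and that of sigma_CD(k,l) is w (psi'(k+l+2) - psi'(k+l+1)). Now psi is
   positive and psi theta n (m+1) / psi theta n m = (theta + m) / (theta + n - m - 1), which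
   exceeds 1 exactly when 2m + 1 > n; for n = 2d + 1, m = k + l + 1 this means k + l > d - 1. *)

lemma psi_pos:
  assumes "\<theta> > 0"
  shows "psi \<theta> n m > 0"
  unfolding psi_def using assms by (intro divide_pos_pos mult_pos_pos prod_pos) auto

lemma psi_Suc_mult:
  assumes "m < n"
  shows "psi \<theta> n (Suc m) * (\<theta> + real (n - Suc m)) = psi \<theta> n m * (\<theta> + real m)"
proof -
  obtain j where j: "n - Suc m = j" "n - m = Suc j"
    using assms by (metis Suc_diff_Suc)
  show ?thesis
    unfolding psi_def j by (simp add: prod.nat_ivl_Suc' field_simps)
qed

lemma sgn_psi_Suc_diff:
  assumes "\<theta> > 0" and "m < n"
  shows "sgn (psi \<theta> n (Suc m) - psi \<theta> n m) = sgn (real (2 * m + 1) - real n)"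
proof -
  define q where "q = \<theta> + real (n - Suc m)"
  have "q > 0"
    unfolding q_def using assms(1) by simp
  have "(psi \<theta> n (Suc m) - psi \<theta> n m) * q = psi \<theta> n m * (\<theta> + real m - q)"
    using psi_Suc_mult[OF assms(2), of \<theta>] by (simp add: q_def algebra_simps)
  also have "\<theta> + real m - q = real (2 * m + 1) - real n"
    unfolding q_def using assms(2) by (simp add: of_nat_diff)
  finally have "sgn (psi \<theta> n (Suc m) - psi \<theta> n m) * sgn q
      = sgn (psi \<theta> n m) * sgn (real (2 * m + 1) - real n)"
    by (metis sgn_mult)
  then show ?thesis
    using \<open>q > 0\<close> psi_pos[OF assms(1)] by simp
qed

lemma sum_sum_fun_upd2:
  fixes g :: "'a \<Rightarrow> 'b \<Rightarrow> 'c \<Rightarrow> 'd::ab_group_add"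
  assumes "finite A" "finite B" "a \<in> A" "b \<in> B"
  shows "(\<Sum>x\<in>A. \<Sum>y\<in>B. g x y ((h(a := (h a)(b := v))) x y))
       = (\<Sum>x\<in>A. \<Sum>y\<in>B. g x y (h x y)) + (g a b v - g a b (h a b))"
proof -
  define \<delta> where "\<delta> = g a b v - g a b (h a b)"
  have upd: "g x y ((h(a := (h a)(b := v))) x y) = g x y (h x y) + (if x = a then if y = b then \<delta> else 0 else 0)"
    for x y by (auto simp: \<delta>_def)
  have inner: "(\<Sum>y\<in>B. if x = a then if y = b then \<delta> else 0 else 0) = (if x = a then \<delta> else 0)" for x
    using assms by (cases "x = a") simp_all
  show ?thesis
    unfolding upd sum.distrib inner using assms by (simp add: \<delta>_def)
qed

definition binom_weight :: "nat \<Rightarrow> nat \<Rightarrow> nat \<Rightarrow> real" where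
  "binom_weight d k l = real ((d - 1) choose k) * real ((d - 1) choose l)"

lemma binom_weight_pos: "k < d \<Longrightarrow> l < d \<Longrightarrow> binom_weight d k l > 0"
  unfolding binom_weight_def by simp

context
  fixes d k l :: nat
  assumes k: "k < d" and l: "l < d"
begin

private lemma index_mem: "k \<in> {0..d-1}" "l \<in> {0..d-1}"
  using k l by auto

lemma Fval_sCC_update:
  "Fval d \<theta> muC muD (sCC(k := (sCC k)(l := sCC k l + t))) sCD sDD
     = Fval d \<theta> muC muD sCC sCD sDD - binom_weight d k l * psi \<theta> (2*d+1) (k+l+2) * t"
  unfolding Fval_def
  by (subst sum_sum_fun_upd2[OF _ _ index_mem, where g = "\<lambda>k' l' x.
        real ((d-1) choose k') * real ((d-1) choose l') * (- psi \<theta> (2*d+1) (k'+l'+2) * (x - sCD k' l')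
        + psi \<theta> (2*d+1) (k'+l'+1) * (sDD k' l' - sCD k' l'))"])
     (simp_all add: binom_weight_def algebra_simps)

lemma Fval_sDD_update:
  "Fval d \<theta> muC muD sCC sCD (sDD(k := (sDD k)(l := sDD k l + t)))
     = Fval d \<theta> muC muD sCC sCD sDD + binom_weight d k l * psi \<theta> (2*d+1) (k+l+1) * t"
  unfolding Fval_def
  by (subst sum_sum_fun_upd2[OF _ _ index_mem, where g = "\<lambda>k' l' x.
        real ((d-1) choose k') * real ((d-1) choose l') * (- psi \<theta> (2*d+1) (k'+l'+2) * (sCC k' l' - sCD k' l')
        + psi \<theta> (2*d+1) (k'+l'+1) * (x - sCD k' l'))"])
     (simp_all add: binom_weight_def algebra_simps)

lemma Fval_sCD_update:
  "Fval d \<theta> muC muD sCC (sCD(k := (sCD k)(l := sCD k l + t))) sDD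
     = Fval d \<theta> muC muD sCC sCD sDD
       + binom_weight d k l * (psi \<theta> (2*d+1) (k+l+2) - psi \<theta> (2*d+1) (k+l+1)) * t"
  unfolding Fval_def
  by (subst sum_sum_fun_upd2[OF _ _ index_mem, where g = "\<lambda>k' l' x.
        real ((d-1) choose k') * real ((d-1) choose l') * (- psi \<theta> (2*d+1) (k'+l'+2) * (sCC k' l' - x)
        + psi \<theta> (2*d+1) (k'+l'+1) * (sDD k' l' - x))"])
     (simp_all add: binom_weight_def algebra_simps)

end

theorem mainTheorem2:
  fixes d :: nat and \<theta> :: real
  assumes "d \<ge> 2" and "\<theta> > 0"
  shows "\<forall>k<d. \<forall>l<d.
     (\<exists>c<0. \<forall>muC muD sCC sCD sDD t.
        Fval d \<theta> muC muD (sCC(k := (sCC k)(l := sCC k l + t))) sCD sDD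
          = Fval d \<theta> muC muD sCC sCD sDD + c * t)
   \<and> (\<exists>c>0. \<forall>muC muD sCC sCD sDD t.
        Fval d \<theta> muC muD sCC sCD (sDD(k := (sDD k)(l := sDD k l + t)))
          = Fval d \<theta> muC muD sCC sCD sDD + c * t)
   \<and> (\<exists>c. (if k + l > d - 1 then c > 0 else if k + l < d - 1 then c < 0 else c = 0)
        \<and> (\<forall>muC muD sCC sCD sDD t.
        Fval d \<theta> muC muD sCC (sCD(k := (sCD k)(l := sCD k l + t))) sDD
          = Fval d \<theta> muC muD sCC sCD sDD + c * t))"
proof (intro allI impI conjI)
  fix k l assume k: "k < d" and l: "l < d"
  define w where "w = binom_weight d k l"
  have "w > 0"
    unfolding w_def using k l by (rule binom_weight_pos)
  show "\<exists>c<0. \<forall>muC muD sCC sCD sDD t. Fval d \<theta> muC muD (sCC(k := (sCC k)(l := sCC k l + t))) sCD sDD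
          = Fval d \<theta> muC muD sCC sCD sDD + c * t"
    using \<open>w > 0\<close> psi_pos[OF assms(2)] Fval_sCC_update[OF k l]
    by (intro exI[of _ "- w * psi \<theta> (2*d+1) (k+l+2)"]) (simp add: w_def)
  show "\<exists>c>0. \<forall>muC muD sCC sCD sDD t. Fval d \<theta> muC muD sCC sCD (sDD(k := (sDD k)(l := sDD k l + t)))
          = Fval d \<theta> muC muD sCC sCD sDD + c * t"
    using \<open>w > 0\<close> psi_pos[OF assms(2)] Fval_sDD_update[OF k l]
    by (intro exI[of _ "w * psi \<theta> (2*d+1) (k+l+1)"]) (simp add: w_def)
  define c where "c = w * (psi \<theta> (2*d+1) (k+l+2) - psi \<theta> (2*d+1) (k+l+1))"
  have "sgn c = sgn (real (2 * (k+l+1) + 1) - real (2*d+1))"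
    using sgn_psi_Suc_diff[OF assms(2), of "k+l+1" "2*d+1"] k l \<open>w > 0\<close>
    by (simp add: c_def sgn_mult)
  then have "if k + l > d - 1 then c > 0 else if k + l < d - 1 then c < 0 else c = 0"
    using k by (auto simp: sgn_if split: if_splits)
  then show "\<exists>c. (if k + l > d - 1 then c > 0 else if k + l < d - 1 then c < 0 else c = 0)
        \<and> (\<forall>muC muD sCC sCD sDD t. Fval d \<theta> muC muD sCC (sCD(k := (sCD k)(l := sCD k l + t))) sDD
          = Fval d \<theta> muC muD sCC sCD sDD + c * t)"
    using Fval_sCD_update[OF k l] by (auto simp: c_def w_def)
qed

end
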